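(* Let $\beta\in(0,2)$ and let $g:\mathbb{R}\to\mathbb{R}$ be measurable such that there exist $K>0$, $\kappa>-1/\beta$ and $\alpha>0$ with $\alpha\beta>2$ and $$|g(x)|\le K\big(x^\kappa\mathbf 1_{[0,1)}(x)+x^{-\alpha}\mathbf 1_{[1,\infty)}(x)\big)\quad\text{for all }x\in\mathbb{R}.$$ Fix $m\in\mathbb{N}$ and define, for $i\in\mathbb{Z}$, $$\rho_i=\int_{\mathbb{R}}|g(x)g(x+i)|^{\beta/2}\,\mathrm{d}x,\qquad \mu_i=\int_{-m}^{\infty}|g(x+i)|^\beta\,\mathrm{d}x.$$ Then there exists a constant $C>0$ such that for every $i\in\mathbb{N}$: (i) $\rho_i\le C\,i^{-\alpha\beta/2}$; (ii) if $i>m$, then $\mu_i\le C\,(i-m)^{1-\alpha\beta}$. *)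

theory Defs
  imports "HOL-Analysis.Analysis"
begin

end

theory Submission
  imports Defs
begin

text \<open>Since \<open>g\<close> vanishes on the negative axis and \<open>x + i \<ge> i \<ge> 1\<close> for \<open>x \<ge> 0\<close>, the factor
  \<open>|g (x + i)|\<^sup>\<beta>\<^sup>/\<^sup>2\<close> in \<open>\<rho>\<^sub>i\<close> is at most \<open>K\<^sup>\<beta>\<^sup>/\<^sup>2 i\<^sup>-\<^sup>\<alpha>\<^sup>\<beta>\<^sup>/\<^sup>2\<close>, while \<open>|g x|\<^sup>\<beta>\<^sup>/\<^sup>2\<close> is dominated by the
  same kind of envelope with exponents \<open>\<kappa>\<beta>/2 > -1\<close> and \<open>\<alpha>\<beta>/2 > 1\<close>, hence integrable. For \<open>\<mu>\<^sub>i\<close>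
  the integrand is at most \<open>K\<^sup>\<beta> (x + i)\<^sup>-\<^sup>\<alpha>\<^sup>\<beta>\<close>, whose integral over \<open>[-m, \<infinity>)\<close> is explicit.\<close>

definition decay_envelope :: "real \<Rightarrow> real \<Rightarrow> real \<Rightarrow> real" where
  "decay_envelope \<kappa> \<alpha> x = x powr \<kappa> * indicator {0..<1} x + x powr (-\<alpha>) * indicator {1..} x"

lemma decay_envelope_nonneg: "decay_envelope \<kappa> \<alpha> x \<ge> 0"
  by (simp add: decay_envelope_def indicator_def)

lemma decay_envelope_powr:
  assumes "s > 0"
  shows "decay_envelope \<kappa> \<alpha> x powr s = decay_envelope (\<kappa> * s) (\<alpha> * s) x"
  using assms by (auto simp: decay_envelope_def indicator_def powr_powr)

lemma nn_integral_decay_envelope_le: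
  assumes "\<kappa> > -1" "\<alpha> > 1"
  shows "(\<integral>\<^sup>+ x. ennreal (decay_envelope \<kappa> \<alpha> x) \<partial>lborel) \<le> ennreal (1 / (\<kappa> + 1) + 1 / (\<alpha> - 1))"
proof -
  have head: "(\<integral>\<^sup>+ x. ennreal (x powr \<kappa>) * indicator {0..1} x \<partial>lborel) = ennreal (1 / (\<kappa> + 1))"
    using nn_integral_has_integral_lebesgue'[OF _ has_integral_powr_from_0[OF assms(1), of 1]] by simp
  have "-(1 powr (-\<alpha> + 1)) / (-\<alpha> + 1) = 1 / (\<alpha> - 1)"
    by (simp add: divide_simps)
  then have tail: "(\<integral>\<^sup>+ x. ennreal (x powr -\<alpha>) * indicator {1..} x \<partial>lborel) = ennreal (1 / (\<alpha> - 1))"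
    using nn_integral_has_integral_lebesgue'[OF _ has_integral_powr_to_inf[of "-\<alpha>" 1]] assms(2)
    by simp
  have "(\<integral>\<^sup>+ x. ennreal (decay_envelope \<kappa> \<alpha> x) \<partial>lborel)
      \<le> (\<integral>\<^sup>+ x. ennreal (x powr \<kappa>) * indicator {0..1} x + ennreal (x powr -\<alpha>) * indicator {1..} x \<partial>lborel)"
    by (intro nn_integral_mono) (auto simp: decay_envelope_def indicator_def)
  also have "\<dots> = ennreal (1 / (\<kappa> + 1)) + ennreal (1 / (\<alpha> - 1))"
    by (subst nn_integral_add) (auto simp: head tail)
  also have "\<dots> = ennreal (1 / (\<kappa> + 1) + 1 / (\<alpha> - 1))"
    using assms by (simp add: ennreal_plus)
  finally show ?thesis .
qed

lemma abs_mult_shift_powr_le_envelope: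
  fixes f :: "real \<Rightarrow> real"
  assumes f_le: "\<And>x. \<bar>f x\<bar> \<le> K * decay_envelope \<kappa> \<alpha> x"
    and "K \<ge> 0" "\<alpha> > 0" "\<beta> > 0" "t \<ge> 1"
  shows "\<bar>f x * f (x + t)\<bar> powr (\<beta> / 2)
    \<le> K powr \<beta> * t powr (-\<alpha> * \<beta> / 2) * decay_envelope (\<kappa> * \<beta> / 2) (\<alpha> * \<beta> / 2) x"
proof (cases "x < 0")
  case True
  then have "f x = 0"
    using f_le[of x] by (simp add: decay_envelope_def)
  then show ?thesis
    using decay_envelope_nonneg by simp
next
  case False
  have "\<bar>f (x + t)\<bar> \<le> K * (x + t) powr (-\<alpha>)"
    using f_le[of "x + t"] False \<open>t \<ge> 1\<close> by (simp add: decay_envelope_def)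
  also have "\<dots> \<le> K * t powr (-\<alpha>)"
    using False assms(2-5) by (intro mult_left_mono powr_mono2') auto
  finally have shifted: "\<bar>f (x + t)\<bar> \<le> K * t powr (-\<alpha>)" .
  have "\<bar>f x * f (x + t)\<bar> powr (\<beta> / 2) = \<bar>f x\<bar> powr (\<beta> / 2) * \<bar>f (x + t)\<bar> powr (\<beta> / 2)"
    by (simp add: abs_mult powr_mult)
  also have "\<dots> \<le> (K * decay_envelope \<kappa> \<alpha> x) powr (\<beta> / 2) * (K * t powr (-\<alpha>)) powr (\<beta> / 2)"
    using \<open>\<beta> > 0\<close> f_le[of x] shifted by (intro mult_mono powr_mono2) auto
  also have "\<dots> = (K powr (\<beta> / 2) * K powr (\<beta> / 2)) * t powr (-\<alpha> * \<beta> / 2)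
      * decay_envelope \<kappa> \<alpha> x powr (\<beta> / 2)"
    using \<open>K \<ge> 0\<close> decay_envelope_nonneg[of \<kappa> \<alpha> x] by (simp add: powr_mult powr_powr)
  also have "\<dots> = K powr \<beta> * t powr (-\<alpha> * \<beta> / 2) * decay_envelope (\<kappa> * \<beta> / 2) (\<alpha> * \<beta> / 2) x"
    using \<open>\<beta> > 0\<close> by (simp add: decay_envelope_powr powr_add[symmetric] mult.assoc)
  finally show ?thesis .
qed

lemma nn_integral_abs_mult_shift_powr_le:
  fixes f :: "real \<Rightarrow> real"
  assumes "\<And>x. \<bar>f x\<bar> \<le> K * decay_envelope \<kappa> \<alpha> x"
    and "K \<ge> 0" "\<beta> > 0" "\<kappa> * \<beta> > -2" "\<alpha> * \<beta> > 2" "t \<ge> 1"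
  shows "(\<integral>\<^sup>+ x. ennreal (\<bar>f x * f (x + t)\<bar> powr (\<beta> / 2)) \<partial>lborel)
    \<le> ennreal (K powr \<beta> * (1 / (\<kappa> * \<beta> / 2 + 1) + 1 / (\<alpha> * \<beta> / 2 - 1)) * t powr (-\<alpha> * \<beta> / 2))"
proof -
  define c where "c = K powr \<beta> * t powr (-\<alpha> * \<beta> / 2)"
  have "\<alpha> > 0"
    using zero_less_mult_pos2[of \<alpha> \<beta>] assms(3,5) by linarith
  have "(\<integral>\<^sup>+ x. ennreal (\<bar>f x * f (x + t)\<bar> powr (\<beta> / 2)) \<partial>lborel)
      \<le> (\<integral>\<^sup>+ x. ennreal (c * decay_envelope (\<kappa> * \<beta> / 2) (\<alpha> * \<beta> / 2) x) \<partial>lborel)"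
    using abs_mult_shift_powr_le_envelope[OF assms(1,2) \<open>\<alpha> > 0\<close> assms(3,6)]
    by (intro nn_integral_mono ennreal_leI) (simp add: c_def mult.assoc)
  also have "\<dots> = (\<integral>\<^sup>+ x. ennreal c * ennreal (decay_envelope (\<kappa> * \<beta> / 2) (\<alpha> * \<beta> / 2) x) \<partial>lborel)"
    by (simp add: c_def ennreal_mult decay_envelope_nonneg)
  also have "\<dots> = ennreal c * (\<integral>\<^sup>+ x. ennreal (decay_envelope (\<kappa> * \<beta> / 2) (\<alpha> * \<beta> / 2) x) \<partial>lborel)"
    by (rule nn_integral_cmult) (simp add: decay_envelope_def)
  also have "\<dots> \<le> ennreal c * ennreal (1 / (\<kappa> * \<beta> / 2 + 1) + 1 / (\<alpha> * \<beta> / 2 - 1))"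
    using assms(4,5) by (intro mult_left_mono nn_integral_decay_envelope_le) auto
  also have "\<dots> = ennreal (c * (1 / (\<kappa> * \<beta> / 2 + 1) + 1 / (\<alpha> * \<beta> / 2 - 1)))"
    using assms(4,5) by (intro ennreal_mult[symmetric]) (auto simp: c_def)
  also have "\<dots> = ennreal (K powr \<beta> * (1 / (\<kappa> * \<beta> / 2 + 1) + 1 / (\<alpha> * \<beta> / 2 - 1)) * t powr (-\<alpha> * \<beta> / 2))"
    by (rule arg_cong[where f = ennreal]) (simp add: c_def mult_ac)
  finally show ?thesis .
qed

lemma nn_integral_shifted_powr_tail:
  fixes r s t :: real
  assumes "r < -1" "t - s > 0"
  shows "(\<integral>\<^sup>+ x \<in> {-s..}. ennreal ((x + t) powr r) \<partial>lborel) = ennreal (-((t - s) powr (r + 1)) / (r + 1))"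
proof -
  have [measurable]: "(\<lambda>y. ennreal (y powr r) * indicator {t - s..} y) \<in> borel_measurable borel"
    by measurable
  have "(\<integral>\<^sup>+ x \<in> {-s..}. ennreal ((x + t) powr r) \<partial>lborel)
      = (\<integral>\<^sup>+ x. ennreal ((t + 1 * x) powr r) * indicator {t - s..} (t + 1 * x) \<partial>lborel)"
    by (intro nn_integral_cong) (simp add: add.commute split: split_indicator)
  also have "\<dots> = (\<integral>\<^sup>+ y. ennreal (y powr r) * indicator {t - s..} y \<partial>lborel)"
    using nn_integral_real_affine[of "\<lambda>y. ennreal (y powr r) * indicator {t - s..} y" 1 t] by simp
  also have "\<dots> = ennreal (-((t - s) powr (r + 1)) / (r + 1))"
    by (rule nn_integral_has_integral_lebesgue') (use has_integral_powr_to_inf[OF assms] in auto)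
  finally show ?thesis .
qed

lemma nn_integral_shifted_tail_powr_le:
  fixes f :: "real \<Rightarrow> real"
  assumes f_le: "\<And>y. y \<ge> t - s \<Longrightarrow> \<bar>f y\<bar> \<le> K * y powr (-\<alpha>)"
    and "K \<ge> 0" "\<beta> > 0" "\<alpha> * \<beta> > 1" "t - s > 0"
  shows "(\<integral>\<^sup>+ x \<in> {-s..}. ennreal (\<bar>f (x + t)\<bar> powr \<beta>) \<partial>lborel)
    \<le> ennreal (K powr \<beta> / (\<alpha> * \<beta> - 1) * (t - s) powr (1 - \<alpha> * \<beta>))"
proof -
  have pointwise: "\<bar>f (x + t)\<bar> powr \<beta> \<le> K powr \<beta> * (x + t) powr (-\<alpha> * \<beta>)" if "x \<ge> -s" for x
  proof -
    have "\<bar>f (x + t)\<bar> powr \<beta> \<le> (K * (x + t) powr (-\<alpha>)) powr \<beta>"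
      using f_le[of "x + t"] that \<open>\<beta> > 0\<close> by (intro powr_mono2) auto
    also have "\<dots> = K powr \<beta> * (x + t) powr (-\<alpha> * \<beta>)"
      using \<open>K \<ge> 0\<close> that \<open>t - s > 0\<close> by (simp add: powr_mult powr_powr)
    finally show ?thesis .
  qed
  have "(\<integral>\<^sup>+ x \<in> {-s..}. ennreal (\<bar>f (x + t)\<bar> powr \<beta>) \<partial>lborel)
      \<le> (\<integral>\<^sup>+ x \<in> {-s..}. ennreal (K powr \<beta> * (x + t) powr (-\<alpha> * \<beta>)) \<partial>lborel)"
    using pointwise by (intro nn_integral_mono) (simp split: split_indicator)
  also have "\<dots> = (\<integral>\<^sup>+ x. ennreal (K powr \<beta>) * (ennreal ((x + t) powr (-\<alpha> * \<beta>)) * indicator {-s..} x) \<partial>lborel)"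
    by (simp add: ennreal_mult mult.assoc)
  also have "\<dots> = ennreal (K powr \<beta>) * (\<integral>\<^sup>+ x \<in> {-s..}. ennreal ((x + t) powr (-\<alpha> * \<beta>)) \<partial>lborel)"
    by (rule nn_integral_cmult) simp
  also have "\<dots> = ennreal (K powr \<beta>) * ennreal (-((t - s) powr (-\<alpha> * \<beta> + 1)) / (-\<alpha> * \<beta> + 1))"
    using assms(4,5) by (subst nn_integral_shifted_powr_tail) auto
  also have "\<dots> = ennreal (K powr \<beta>) * ennreal ((t - s) powr (1 - \<alpha> * \<beta>) / (\<alpha> * \<beta> - 1))"
    by (simp add: minus_divide_right)
  also have "\<dots> = ennreal (K powr \<beta> / (\<alpha> * \<beta> - 1) * (t - s) powr (1 - \<alpha> * \<beta>))"
    using assms(4) by (simp add: ennreal_mult[symmetric])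
  finally show ?thesis .
qed

theorem lemmaA1:
  fixes \<beta> K \<kappa> \<alpha> :: real and g :: "real \<Rightarrow> real" and m :: nat
  assumes "0 < \<beta>" "\<beta> < 2"
    and "g \<in> borel_measurable lborel"
    and "K > 0" "\<kappa> > - 1 / \<beta>" "\<alpha> > 0" "\<alpha> * \<beta> > 2"
    and "\<And>x. \<bar>g x\<bar> \<le> K * (x powr \<kappa> * indicator {0..<1} x + x powr (-\<alpha>) * indicator {1..} x)"
  shows "\<exists>C>0. \<forall>i::nat.
     (i \<ge> 1 \<longrightarrow>
        (\<integral>\<^sup>+ x. ennreal (\<bar>g x * g (x + real i)\<bar> powr (\<beta> / 2)) \<partial>lborel)
          \<le> ennreal (C * real i powr (- \<alpha> * \<beta> / 2))) \<and>
     (i > m \<longrightarrow>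
        (\<integral>\<^sup>+ x \<in> {- real m..}. ennreal (\<bar>g (x + real i)\<bar> powr \<beta>) \<partial>lborel)
          \<le> ennreal (C * (real i - real m) powr (1 - \<alpha> * \<beta>)))"
proof -
  have g_le: "\<bar>g x\<bar> \<le> K * decay_envelope \<kappa> \<alpha> x" for x
    using assms(8) by (simp add: decay_envelope_def)
  have g_tail_le: "\<bar>g y\<bar> \<le> K * y powr (-\<alpha>)" if "y \<ge> 1" for y
    using assms(8)[of y] that by (simp add: indicator_def)
  have "\<kappa> * \<beta> > -2"
    using mult_strict_right_mono[OF assms(5,1)] assms(1) by simp
  define C\<^sub>\<rho> where "C\<^sub>\<rho> = K powr \<beta> * (1 / (\<kappa> * \<beta> / 2 + 1) + 1 / (\<alpha> * \<beta> / 2 - 1))"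
  define C\<^sub>\<mu> where "C\<^sub>\<mu> = K powr \<beta> / (\<alpha> * \<beta> - 1)"
  define C where "C = max 1 (max C\<^sub>\<rho> C\<^sub>\<mu>)"
  have enlarge: "ennreal (c * x) \<le> ennreal (C * x)" if "c \<in> {C\<^sub>\<rho>, C\<^sub>\<mu>}" "x \<ge> 0" for c x
    using that by (intro ennreal_leI mult_right_mono) (auto simp: C_def)
  show ?thesis
  proof (intro exI[of _ C] conjI allI impI)
    fix i :: nat
    assume "i \<ge> 1"
    then have "(\<integral>\<^sup>+ x. ennreal (\<bar>g x * g (x + real i)\<bar> powr (\<beta> / 2)) \<partial>lborel)
        \<le> ennreal (C\<^sub>\<rho> * real i powr (- \<alpha> * \<beta> / 2))"
      unfolding C\<^sub>\<rho>_def using assms \<open>\<kappa> * \<beta> > -2\<close>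
      by (intro nn_integral_abs_mult_shift_powr_le[OF g_le]) auto
    also have "\<dots> \<le> ennreal (C * real i powr (- \<alpha> * \<beta> / 2))"
      by (rule enlarge) auto
    finally show "(\<integral>\<^sup>+ x. ennreal (\<bar>g x * g (x + real i)\<bar> powr (\<beta> / 2)) \<partial>lborel)
        \<le> ennreal (C * real i powr (- \<alpha> * \<beta> / 2))" .
  next
    fix i :: nat
    assume "i > m"
    then have "(\<integral>\<^sup>+ x \<in> {- real m..}. ennreal (\<bar>g (x + real i)\<bar> powr \<beta>) \<partial>lborel)
        \<le> ennreal (C\<^sub>\<mu> * (real i - real m) powr (1 - \<alpha> * \<beta>))"
      unfolding C\<^sub>\<mu>_def using assms
      by (intro nn_integral_shifted_tail_powr_le g_tail_le) auto
    also have "\<dots> \<le> ennreal (C * (real i - real m) powr (1 - \<alpha> * \<beta>))"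
      by (rule enlarge) auto
    finally show "(\<integral>\<^sup>+ x \<in> {- real m..}. ennreal (\<bar>g (x + real i)\<bar> powr \<beta>) \<partial>lborel)
        \<le> ennreal (C * (real i - real m) powr (1 - \<alpha> * \<beta>))" .
  qed (simp add: C_def)
qed

end
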